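(* In the Standing Setup below, with $c\in\sigma$ the point of the inscribed triple of $\Delta_1=[1,g]\cup\sigma\cup[1,hg]$ lying on $\sigma=[g,hg]$, there is a constant $K_2>0$, depending only on $G,A,H$ (and not on the bigon), such that: if $\zeta$ is a subsegment of $\sigma$ whose midpoint is $c$ and which is contained in the closed $\delta$-neighborhood of $\alpha$ or in the closed $\delta$-neighborhood of $\beta$, then $l(\zeta)\le K_2$.
   Context: Standing Setup. $G$ is a word-hyperbolic group with marked finite generating set $\pi:A\to G$ (a finite alphabet $A$ with $\pi(A)$ generating $G$); $X=\Gamma(G,A)$ is its Cayley graph with word metric $d_X$, $|g|_X=d_X(1,g)$; $\delta\ge10$ is an integer such that all geodesic triangles of $X$ are $\delta$-trim; $H\le G$ is a subgroup that is $E$-quasiconvex in $X$ (every geodesic with endpoints in $H$ lies in the $E$-neighborhood of $H$). $Y=\Gamma(G/H,A)$ is the relative Cayley graph: vertices the right cosets $Hg$, and for each $(Hg,a)$ an edge from $Hg$ to $Hg\pi(a)$ labeled $a$, edges of length one. A path is near geodesic if it is $p_1p'p_2$ with $p_1,p',p_2$ geodesic and $l(p_1),l(p_2)\le1$. Key Lemma (Lemma 3.3): there is an integer $K_1>0$ such that whenever $g,f$ are $|\cdot|_X$-shortest in $Hg,Hf$, $w$ labels a near geodesic path in $Y$ from $Hg$ to $Hf$ and $h\in H$ satisfies $hf=g\bar w$, then $|h|_X\le K_1$. Bigon data: $g,f\in G$ are $|\cdot|_X$-shortest elements of their cosets; $\alpha',\beta'$ are near geodesic paths in $Y$ from $Hg$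 to $Hf$ with labels $w,u$; $h_1,h_2\in H$ satisfy $h_1g\bar w=f=h_2g\bar u$ (so $|h_i|_X\le K_1$); $f'=g\bar w$ and $h=h_1^{-1}h_2$, so $f'=hg\bar u$ and $|h|_X\le 2K_1$. Fix geodesics $[1,g]$, $[1,hg]$, $\sigma=[g,hg]$, $\alpha=[g,f']$, $\beta=[hg,f']$ in $X$. Inscribed triple: for a geodesic triangle with sides $[z,x],[z,y],[x,y]$, it is the unique points $p\in[z,x]$, $q\in[z,y]$, $r\in[x,y]$ with $d(z,p)=d(z,q)=(x,y)_z$, $d(x,p)=d(x,r)=(y,z)_x$, $d(y,q)=d(y,r)=(x,z)_y$, where $(x,y)_z=\frac12[d(z,x)+d(z,y)-d(x,y)]$. $\delta$-trim: for the sides $[z,x],[z,y]$, points at equal distance $\le(x,y)_z$ from $z$ are within $\delta$ of each other, and similarly at the vertices $x$ and $y$. *)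

theory Defs
  imports "HOL-Algebra.Algebra" "HOL-Analysis.Analysis"
begin

text \<open>A word over A and its inverses: a list of letters (a, True) = a, (a, False) = a^-1.\<close>

type_synonym 'a word = "('a \<times> bool) list"

definition word_in :: "'a set \<Rightarrow> 'a word \<Rightarrow> bool" where
  "word_in A w \<longleftrightarrow> set (map fst w) \<subseteq> A"

definition evalw :: "('g, 'b) monoid_scheme \<Rightarrow> ('a \<Rightarrow> 'g) \<Rightarrow> 'a word \<Rightarrow> 'g" where
  "evalw G \<pi> w = foldr (\<lambda>(a, b) acc. (if b then \<pi> a else inv\<^bsub>G\<^esub> (\<pi> a)) \<otimes>\<^bsub>G\<^esub> acc) w \<one>\<^bsub>G\<^esub>"

definition wlen :: "('g, 'b) monoid_scheme \<Rightarrow> 'a set \<Rightarrow> ('a \<Rightarrow> 'g) \<Rightarrow> 'g \<Rightarrow> nat" where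
  "wlen G A \<pi> g = (LEAST n. \<exists>w. length w = n \<and> word_in A w \<and> evalw G \<pi> w = g)"

definition wdist :: "('g, 'b) monoid_scheme \<Rightarrow> 'a set \<Rightarrow> ('a \<Rightarrow> 'g) \<Rightarrow> 'g \<Rightarrow> 'g \<Rightarrow> real" where
  "wdist G A \<pi> x y = real (wlen G A \<pi> (inv\<^bsub>G\<^esub> x \<otimes>\<^bsub>G\<^esub> y))"

text \<open>A point of X is a vertex, or an interior point of the edge (g,a) from g to g*pi(a),
  at distance t (0 < t < 1) from g.\<close>

datatype ('g, 'a) cpoint = Vx 'g | Ed 'g 'a real

definition valid_pt :: "('g, 'b) monoid_scheme \<Rightarrow> 'a set \<Rightarrow> ('g, 'a) cpoint \<Rightarrow> bool" where
  "valid_pt G A p = (case p of Vx x \<Rightarrow> x \<in> carrier G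
                       | Ed g a t \<Rightarrow> g \<in> carrier G \<and> a \<in> A \<and> 0 < t \<and> t < 1)"

fun ends :: "('g, 'b) monoid_scheme \<Rightarrow> ('a \<Rightarrow> 'g) \<Rightarrow> ('g, 'a) cpoint \<Rightarrow> ('g \<times> real) list" where
  "ends G \<pi> (Vx x) = [(x, 0)]"
| "ends G \<pi> (Ed g a t) = [(g, t), (g \<otimes>\<^bsub>G\<^esub> \<pi> a, 1 - t)]"

fun same_edge :: "('g, 'a) cpoint \<Rightarrow> ('g, 'a) cpoint \<Rightarrow> real set" where
  "same_edge (Ed g a t) (Ed g' a' s) = (if g = g' \<and> a = a' then {\<bar>t - s\<bar>} else {})"
| "same_edge _ _ = {}"

text \<open>The path metric of the Cayley graph with edges of length one.\<close>

definition cdist :: "('g, 'b) monoid_scheme \<Rightarrow> 'a set \<Rightarrow> ('a \<Rightarrow> 'g)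
                     \<Rightarrow> ('g, 'a) cpoint \<Rightarrow> ('g, 'a) cpoint \<Rightarrow> real" where
  "cdist G A \<pi> p q = Min ({d1 + wdist G A \<pi> x y + d2 | x d1 y d2.
                             (x, d1) \<in> set (ends G \<pi> p) \<and> (y, d2) \<in> set (ends G \<pi> q)}
                         \<union> same_edge p q)"

definition geod :: "('g, 'b) monoid_scheme \<Rightarrow> 'a set \<Rightarrow> ('a \<Rightarrow> 'g)
                   \<Rightarrow> (real \<Rightarrow> ('g, 'a) cpoint) \<Rightarrow> real \<Rightarrow> ('g, 'a) cpoint \<Rightarrow> ('g, 'a) cpoint \<Rightarrow> bool" where
  "geod G A \<pi> \<gamma> L p q \<longleftrightarrow> 0 \<le> L \<and> \<gamma> 0 = p \<and> \<gamma> L = q \<and>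
     (\<forall>t \<in> {0..L}. valid_pt G A (\<gamma> t)) \<and>
     (\<forall>s \<in> {0..L}. \<forall>t \<in> {0..L}. cdist G A \<pi> (\<gamma> s) (\<gamma> t) = \<bar>s - t\<bar>)"

definition revp :: "(real \<Rightarrow> 'p) \<Rightarrow> real \<Rightarrow> real \<Rightarrow> 'p" where
  "revp \<gamma> L = (\<lambda>t. \<gamma> (L - t))"

text \<open>Trimness at the common start vertex of two sides p (length Lp) and q (length Lq),
  the opposite side having length Lr.\<close>

definition trim_at :: "('g, 'b) monoid_scheme \<Rightarrow> 'a set \<Rightarrow> ('a \<Rightarrow> 'g) \<Rightarrow> real
      \<Rightarrow> (real \<Rightarrow> ('g, 'a) cpoint) \<Rightarrow> real \<Rightarrow> (real \<Rightarrow> ('g, 'a) cpoint) \<Rightarrow> real \<Rightarrow> real \<Rightarrow> bool" where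
  "trim_at G A \<pi> \<delta> p Lp q Lq Lr \<longleftrightarrow>
     (\<forall>t. 0 \<le> t \<and> t \<le> (Lp + Lq - Lr) / 2 \<longrightarrow> cdist G A \<pi> (p t) (q t) \<le> \<delta>)"

definition all_trim :: "('g, 'b) monoid_scheme \<Rightarrow> 'a set \<Rightarrow> ('a \<Rightarrow> 'g) \<Rightarrow> real \<Rightarrow> bool" where
  "all_trim G A \<pi> \<delta> \<longleftrightarrow>
     (\<forall>x y z p1 L1 p2 L2 p3 L3.
        valid_pt G A x \<and> valid_pt G A y \<and> valid_pt G A z \<and>
        geod G A \<pi> p1 L1 z x \<and> geod G A \<pi> p2 L2 z y \<and> geod G A \<pi> p3 L3 x y \<longrightarrow>
          trim_at G A \<pi> \<delta> p1 L1 p2 L2 L3 \<and>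
          trim_at G A \<pi> \<delta> (revp p1 L1) L1 p3 L3 L2 \<and>
          trim_at G A \<pi> \<delta> (revp p2 L2) L2 (revp p3 L3) L3 L1)"

definition quasiconvex :: "('g, 'b) monoid_scheme \<Rightarrow> 'a set \<Rightarrow> ('a \<Rightarrow> 'g) \<Rightarrow> 'g set \<Rightarrow> real \<Rightarrow> bool" where
  "quasiconvex G A \<pi> H E \<longleftrightarrow>
     (\<forall>x \<in> H. \<forall>y \<in> H. \<forall>\<gamma> L. geod G A \<pi> \<gamma> L (Vx x) (Vx y) \<longrightarrow>
        (\<forall>t \<in> {0..L}. \<exists>k \<in> H. cdist G A \<pi> (\<gamma> t) (Vx k) \<le> E))"

text \<open>A path in Y is determined by its initial vertex Hx and its label w; it ends at H(x w).
  Distance in Y between Hx and Hy.\<close>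

definition ydist :: "('g, 'b) monoid_scheme \<Rightarrow> 'a set \<Rightarrow> ('a \<Rightarrow> 'g) \<Rightarrow> 'g set \<Rightarrow> 'g \<Rightarrow> 'g \<Rightarrow> nat" where
  "ydist G A \<pi> H x y = (LEAST n. \<exists>w. length w = n \<and> word_in A w \<and>
                           H #>\<^bsub>G\<^esub> (x \<otimes>\<^bsub>G\<^esub> evalw G \<pi> w) = H #>\<^bsub>G\<^esub> y)"

definition ygeod :: "('g, 'b) monoid_scheme \<Rightarrow> 'a set \<Rightarrow> ('a \<Rightarrow> 'g) \<Rightarrow> 'g set \<Rightarrow> 'g \<Rightarrow> 'a word \<Rightarrow> bool" where
  "ygeod G A \<pi> H x w \<longleftrightarrow> word_in A w \<and>
     length w = ydist G A \<pi> H x (x \<otimes>\<^bsub>G\<^esub> evalw G \<pi> w)"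

definition near_geod :: "('g, 'b) monoid_scheme \<Rightarrow> 'a set \<Rightarrow> ('a \<Rightarrow> 'g) \<Rightarrow> 'g set \<Rightarrow> 'g \<Rightarrow> 'a word \<Rightarrow> bool" where
  "near_geod G A \<pi> H x w \<longleftrightarrow>
     (\<exists>w1 w' w2. w = w1 @ w' @ w2 \<and> length w1 \<le> 1 \<and> length w2 \<le> 1 \<and>
        ygeod G A \<pi> H x w1 \<and>
        ygeod G A \<pi> H (x \<otimes>\<^bsub>G\<^esub> evalw G \<pi> w1) w' \<and>
        ygeod G A \<pi> H (x \<otimes>\<^bsub>G\<^esub> evalw G \<pi> w1 \<otimes>\<^bsub>G\<^esub> evalw G \<pi> w') w2)"

definition near_geod_from_to :: "('g, 'b) monoid_scheme \<Rightarrow> 'a set \<Rightarrow> ('a \<Rightarrow> 'g) \<Rightarrow> 'g set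
     \<Rightarrow> 'g \<Rightarrow> 'g \<Rightarrow> 'a word \<Rightarrow> bool" where
  "near_geod_from_to G A \<pi> H x y w \<longleftrightarrow> word_in A w \<and> near_geod G A \<pi> H x w \<and>
     H #>\<^bsub>G\<^esub> (x \<otimes>\<^bsub>G\<^esub> evalw G \<pi> w) = H #>\<^bsub>G\<^esub> y"

definition shortest_in_coset :: "('g, 'b) monoid_scheme \<Rightarrow> 'a set \<Rightarrow> ('a \<Rightarrow> 'g) \<Rightarrow> 'g set \<Rightarrow> 'g \<Rightarrow> bool" where
  "shortest_in_coset G A \<pi> H g \<longleftrightarrow> g \<in> carrier G \<and>
     (\<forall>x \<in> H #>\<^bsub>G\<^esub> g. wlen G A \<pi> g \<le> wlen G A \<pi> x)"

definition gprod :: "('g, 'b) monoid_scheme \<Rightarrow> 'a set \<Rightarrow> ('a \<Rightarrow> 'g) \<Rightarrow> 'g \<Rightarrow> 'g \<Rightarrow> 'g \<Rightarrow> real" where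
  "gprod G A \<pi> x y z = (wdist G A \<pi> z x + wdist G A \<pi> z y - wdist G A \<pi> x y) / 2"

end

theory Submission
  imports Defs
begin

text \<open>Write h = h1^-1 h2, so that \<sigma>, \<alpha>, \<beta> form a geodesic triangle with vertices g, hg and
  g w, whose sides \<alpha> and \<beta> have the word lengths of the elements w and u. Both labels are near geodesic between the
  same cosets, so each exceeds d_Y(Hg, Hf) by at most 4 and the two side lengths differ by at
  most 4. Since g is shortest in Hg and |h| \<le> 2 K1 by the Key Lemma, |g| \<le> |hg| \<le> |g| + 2 K1,
  which puts the midpoint (hg, 1)_g of \<zeta> between |\<sigma>|/2 - K1 and |\<sigma>|/2. In the \<delta>-trim triangle
  the inscribed point on \<sigma> sits at P = (|\<sigma>| + |\<alpha>| - |\<beta>|)/2, within 2 of |\<sigma>|/2, and points of \<sigma>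
  that are \<delta>-close to \<alpha> lie before P + 3\<delta>, those \<delta>-close to \<beta> after P - 3\<delta>. Hence
  l(\<zeta>) \<le> 4 + 2 K1 + 6\<delta>. Quasiconvexity of H and finiteness of A enter only through the Key
  Lemma, which is a hypothesis here.\<close>

locale pseudometric_on =
  fixes S :: "'p set" and d :: "'p \<Rightarrow> 'p \<Rightarrow> real"
  assumes commute: "x \<in> S \<Longrightarrow> y \<in> S \<Longrightarrow> d x y = d y x"
    and triangle: "x \<in> S \<Longrightarrow> y \<in> S \<Longrightarrow> z \<in> S \<Longrightarrow> d x z \<le> d x y + d y z"
begin

definition isometric_segment :: "(real \<Rightarrow> 'p) \<Rightarrow> real \<Rightarrow> bool" where
  "isometric_segment \<gamma> L \<longleftrightarrow> 0 \<le> L \<and> \<gamma> ` {0..L} \<subseteq> S \<and>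
     (\<forall>s \<in> {0..L}. \<forall>t \<in> {0..L}. d (\<gamma> s) (\<gamma> t) = \<bar>s - t\<bar>)"

lemma triangle3:
  "w \<in> S \<Longrightarrow> x \<in> S \<Longrightarrow> y \<in> S \<Longrightarrow> z \<in> S \<Longrightarrow> d w z \<le> d w x + d x y + d y z"
  by (meson add_right_mono order_trans triangle)

lemma isometric_segmentD:
  assumes "isometric_segment \<gamma> L"
  shows "0 \<le> L" and "t \<in> {0..L} \<Longrightarrow> \<gamma> t \<in> S"
    and "s \<in> {0..L} \<Longrightarrow> t \<in> {0..L} \<Longrightarrow> d (\<gamma> s) (\<gamma> t) = \<bar>s - t\<bar>"
  using assms unfolding isometric_segment_def by auto

lemma isometric_segment_length: "isometric_segment \<gamma> L \<Longrightarrow> d (\<gamma> 0) (\<gamma> L) = L"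
  using isometric_segmentD[of \<gamma> L] by force

lemma isometric_segment_revp: "isometric_segment \<gamma> L \<Longrightarrow> isometric_segment (revp \<gamma> L) L"
  unfolding isometric_segment_def revp_def by (auto simp: image_subset_iff)

end

locale trim_triangle = pseudometric_on S d for S :: "'p set" and d +
  fixes \<delta> :: real and \<sigma> :: "real \<Rightarrow> 'p" and T :: real
    and \<alpha> :: "real \<Rightarrow> 'p" and La :: real and \<beta> :: "real \<Rightarrow> 'p" and Lb :: real
  assumes seg_\<sigma>: "isometric_segment \<sigma> T"
    and seg_\<alpha>: "isometric_segment \<alpha> La"
    and seg_\<beta>: "isometric_segment \<beta> Lb"
    and start_\<alpha>: "\<alpha> 0 = \<sigma> 0" and start_\<beta>: "\<beta> 0 = \<sigma> T" and meet: "\<beta> Lb = \<alpha> La"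
    and \<delta>_nonneg: "0 \<le> \<delta>"
    and trim_\<sigma>\<alpha>: "0 \<le> \<tau> \<Longrightarrow> \<tau> \<le> (T + La - Lb) / 2 \<Longrightarrow> d (\<sigma> \<tau>) (\<alpha> \<tau>) \<le> \<delta>"
    and trim_\<sigma>\<beta>: "0 \<le> \<tau> \<Longrightarrow> \<tau> \<le> (T + Lb - La) / 2 \<Longrightarrow> d (\<sigma> (T - \<tau>)) (\<beta> \<tau>) \<le> \<delta>"
    and trim_\<alpha>\<beta>: "0 \<le> \<tau> \<Longrightarrow> \<tau> \<le> (La + Lb - T) / 2 \<Longrightarrow> d (\<alpha> (La - \<tau>)) (\<beta> (Lb - \<tau>)) \<le> \<delta>"
begin

lemma side_lengths_triangle: "T \<le> La + Lb" "La \<le> T + Lb" "Lb \<le> T + La"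
proof -
  have T: "d (\<sigma> 0) (\<sigma> T) = T" and La: "d (\<alpha> 0) (\<alpha> La) = La" and Lb: "d (\<beta> 0) (\<beta> Lb) = Lb"
    using seg_\<sigma> seg_\<alpha> seg_\<beta> by (simp_all add: isometric_segment_length)
  have "\<sigma> 0 \<in> S" "\<sigma> T \<in> S" "\<alpha> La \<in> S"
    using seg_\<sigma> seg_\<alpha> by (auto simp: isometric_segment_def)
  then show "T \<le> La + Lb" "La \<le> T + Lb" "Lb \<le> T + La"
    using T La Lb start_\<alpha> start_\<beta> meet triangle commute by metis+
qed

lemma near_first_side_le:
  assumes t: "t \<in> {0..T}" and s: "s \<in> {0..La}" and close: "d (\<sigma> t) (\<alpha> s) \<le> \<delta>"
  shows "t \<le> (T + La - Lb) / 2 + 3 * \<delta>"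
proof (cases "s \<le> (T + La - Lb) / 2")
  case True
  have s_T: "s \<in> {0..T}" using s True side_lengths_triangle by auto
  have "\<bar>t - s\<bar> = d (\<sigma> t) (\<sigma> s)" using seg_\<sigma> t s_T by (simp add: isometric_segmentD)
  also have "\<dots> \<le> d (\<sigma> t) (\<alpha> s) + d (\<sigma> s) (\<alpha> s)"
    using triangle commute isometric_segmentD(2)[OF seg_\<sigma>] isometric_segmentD(2)[OF seg_\<alpha>] t s s_T
    by metis
  also have "\<dots> \<le> 2 * \<delta>" using close trim_\<sigma>\<alpha>[of s] s True by simp
  finally show ?thesis using True \<delta>_nonneg by linarith
next
  case False
  show ?thesis
  txt \<open>Past the inscribed point \<alpha> s is \<delta>-close to \<beta> u, and if t were past it too, \<sigma> t would be
    \<delta>-close to \<beta> (T - t); these two points of \<beta> are too far apart.\<close>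
  proof (rule ccontr)
    assume far: "\<not> ?thesis"
    define u where "u = Lb - (La - s)"
    have u: "u \<in> {0..Lb}" using s False side_lengths_triangle unfolding u_def by auto
    have Tt: "0 \<le> T - t" "T - t \<le> (T + Lb - La) / 2" using t far \<delta>_nonneg by auto argo
    then have t': "T - t \<in> {0..Lb}" using side_lengths_triangle by auto
    have "d (\<alpha> s) (\<beta> u) \<le> \<delta>" using trim_\<alpha>\<beta>[of "La - s"] s False unfolding u_def by simp
    moreover have "d (\<sigma> t) (\<beta> (T - t)) \<le> \<delta>" using trim_\<sigma>\<beta>[OF Tt] by simp
    moreover have "\<bar>u - (T - t)\<bar> = d (\<beta> u) (\<beta> (T - t))"
      using seg_\<beta> u t' by (simp add: isometric_segmentD)
    moreover have "d (\<beta> u) (\<beta> (T - t)) \<le> d (\<alpha> s) (\<beta> u) + d (\<sigma> t) (\<alpha> s) + d (\<sigma> t) (\<beta> (T - t))"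
      using triangle3 commute isometric_segmentD(2)[OF seg_\<sigma>] isometric_segmentD(2)[OF seg_\<alpha>]
        isometric_segmentD(2)[OF seg_\<beta>] t s u t'
      by metis
    ultimately show False using close far False unfolding u_def by argo
  qed
qed

lemma reverse: "trim_triangle S d \<delta> (revp \<sigma> T) T \<beta> Lb \<alpha> La"
proof unfold_locales
  show "isometric_segment (revp \<sigma> T) T" using seg_\<sigma> by (rule isometric_segment_revp)
  fix \<tau> assume \<tau>: "0 \<le> \<tau>" "\<tau> \<le> (Lb + La - T) / 2"
  have "\<alpha> (La - \<tau>) \<in> S" "\<beta> (Lb - \<tau>) \<in> S"
    using \<tau> side_lengths_triangle isometric_segmentD(2)[OF seg_\<alpha>] isometric_segmentD(2)[OF seg_\<beta>]
    by auto
  then show "d (\<beta> (Lb - \<tau>)) (\<alpha> (La - \<tau>)) \<le> \<delta>" using trim_\<alpha>\<beta> \<tau> commute by simp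
qed (use seg_\<alpha> seg_\<beta> start_\<alpha> start_\<beta> meet \<delta>_nonneg trim_\<sigma>\<alpha> trim_\<sigma>\<beta> commute triangle
     in \<open>auto simp: revp_def\<close>)

lemma near_second_side_ge:
  assumes t: "t \<in> {0..T}" and s: "s \<in> {0..Lb}" and close: "d (\<sigma> t) (\<beta> s) \<le> \<delta>"
  shows "(T + La - Lb) / 2 - 3 * \<delta> \<le> t"
proof -
  interpret reversed: trim_triangle S d \<delta> "revp \<sigma> T" T \<beta> Lb \<alpha> La by (rule reverse)
  have "T - t \<le> (T + Lb - La) / 2 + 3 * \<delta>"
    using reversed.near_first_side_le[of "T - t" s] t s close by (simp add: revp_def)
  then show ?thesis by argo
qed

lemma segment_near_one_side:
  assumes ab: "0 \<le> a" "a \<le> b" "b \<le> T"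
    and near: "(\<forall>t \<in> {a..b}. \<exists>s \<in> {0..La}. d (\<sigma> t) (\<alpha> s) \<le> \<delta>) \<or>
      (\<forall>t \<in> {a..b}. \<exists>s \<in> {0..Lb}. d (\<sigma> t) (\<beta> s) \<le> \<delta>)"
  shows "2 * b \<le> T + La - Lb + 6 * \<delta> \<or> T + La - Lb - 6 * \<delta> \<le> 2 * a"
  using near
proof (elim disjE)
  assume "\<forall>t \<in> {a..b}. \<exists>s \<in> {0..La}. d (\<sigma> t) (\<alpha> s) \<le> \<delta>"
  then obtain s where "s \<in> {0..La}" "d (\<sigma> b) (\<alpha> s) \<le> \<delta>"
    using ab(2) by (meson atLeastAtMost_iff order_refl)
  then have "b \<le> (T + La - Lb) / 2 + 3 * \<delta>" using near_first_side_le[of b s] ab by simp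
  then show ?thesis by argo
next
  assume "\<forall>t \<in> {a..b}. \<exists>s \<in> {0..Lb}. d (\<sigma> t) (\<beta> s) \<le> \<delta>"
  then obtain s where "s \<in> {0..Lb}" "d (\<sigma> a) (\<beta> s) \<le> \<delta>"
    using ab(2) by (meson atLeastAtMost_iff order_refl)
  then have "(T + La - Lb) / 2 - 3 * \<delta> \<le> a" using near_second_side_ge[of a s] ab by simp
  then show ?thesis by argo
qed

end

definition winv :: "'a word \<Rightarrow> 'a word" where
  "winv w = rev (map (\<lambda>(a, b). (a, \<not> b)) w)"

lemma word_in_Nil [simp]: "word_in A []"
  by (simp add: word_in_def)

lemma word_in_Cons [simp]: "word_in A (x # w) \<longleftrightarrow> fst x \<in> A \<and> word_in A w"
  by (simp add: word_in_def)

lemma word_in_append [simp]: "word_in A (w @ v) \<longleftrightarrow> word_in A w \<and> word_in A v"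
  by (auto simp: word_in_def)

lemma word_in_winv [simp]: "word_in A (winv w) \<longleftrightarrow> word_in A w"
  by (induction w) (auto simp: winv_def)

lemma length_winv [simp]: "length (winv w) = length w"
  by (simp add: winv_def)

lemma evalw_Nil [simp]: "evalw G \<pi> [] = \<one>\<^bsub>G\<^esub>"
  by (simp add: evalw_def)

lemma evalw_Cons: "evalw G \<pi> ((a, b) # w) = (if b then \<pi> a else inv\<^bsub>G\<^esub> \<pi> a) \<otimes>\<^bsub>G\<^esub> evalw G \<pi> w"
  by (simp add: evalw_def)

lemma (in group) m_inv_cancel_left [simp]:
  "x \<in> carrier G \<Longrightarrow> y \<in> carrier G \<Longrightarrow> x \<otimes> (inv x \<otimes> y) = y"
  by (simp flip: m_assoc)

lemma (in group) inv_m_cancel_left [simp]: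
  "x \<in> carrier G \<Longrightarrow> y \<in> carrier G \<Longrightarrow> inv x \<otimes> (x \<otimes> y) = y"
  by (simp flip: m_assoc)

locale alphabet_group = group G for G :: "('g, 'b) monoid_scheme" (structure) +
  fixes A :: "'a set" and \<pi> :: "'a \<Rightarrow> 'g"
  assumes alphabet_closed: "\<pi> ` A \<subseteq> carrier G"
begin

lemma letter_closed [simp]: "a \<in> A \<Longrightarrow> \<pi> a \<in> carrier G"
  using alphabet_closed by auto

lemma evalw_closed [simp]: "word_in A w \<Longrightarrow> evalw G \<pi> w \<in> carrier G"
  by (induction w) (auto simp: evalw_Cons)

lemma evalw_append:
  "word_in A w \<Longrightarrow> word_in A v \<Longrightarrow> evalw G \<pi> (w @ v) = evalw G \<pi> w \<otimes> evalw G \<pi> v"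
  by (induction w) (auto simp: evalw_Cons m_assoc)

lemma evalw_winv: "word_in A w \<Longrightarrow> evalw G \<pi> (winv w) = inv (evalw G \<pi> w)"
proof (induction w)
  case (Cons x w)
  obtain a b where x: "x = (a, b)" by fastforce
  have "winv (x # w) = winv w @ [(a, \<not> b)]" by (simp add: winv_def x)
  then show ?case
    using Cons by (simp add: x evalw_append evalw_Cons inv_mult_group)
qed (simp add: winv_def)

lemma wlen_le_length: "word_in A w \<Longrightarrow> wlen G A \<pi> (evalw G \<pi> w) \<le> length w"
  unfolding wlen_def by (rule Least_le) blast

lemma wlen_one [simp]: "wlen G A \<pi> \<one> = 0"
  using wlen_le_length[of "[]"] by simp

lemma wlen_letter: "a \<in> A \<Longrightarrow> wlen G A \<pi> (\<pi> a) \<le> 1"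
  using wlen_le_length[of "[(a, True)]"] by (simp add: evalw_Cons)

lemma wlen_inv_letter: "a \<in> A \<Longrightarrow> wlen G A \<pi> (inv (\<pi> a)) \<le> 1"
  using wlen_le_length[of "[(a, False)]"] by (simp add: evalw_Cons)

end

locale marked_group = alphabet_group +
  assumes generates: "generate G (\<pi> ` A) = carrier G"
begin

lemma exists_word: "x \<in> carrier G \<Longrightarrow> \<exists>w. word_in A w \<and> evalw G \<pi> w = x"
  unfolding generates[symmetric]
proof (induction rule: generate.induct)
  case one
  show ?case by (intro exI[of _ "[]"]) simp
next
  case (incl h)
  then obtain a where "a \<in> A" "h = \<pi> a" by blast
  then show ?case by (intro exI[of _ "[(a, True)]"]) (simp add: evalw_Cons)
next
  case (inv h)
  then obtain a where "a \<in> A" "h = \<pi> a" by blast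
  then show ?case by (intro exI[of _ "[(a, False)]"]) (simp add: evalw_Cons)
next
  case (eng h1 h2)
  then obtain w1 w2 where "word_in A w1" "evalw G \<pi> w1 = h1" "word_in A w2" "evalw G \<pi> w2 = h2"
    by blast
  then show ?case by (intro exI[of _ "w1 @ w2"]) (simp add: evalw_append)
qed

lemma exists_shortest_word:
  assumes "x \<in> carrier G"
  shows "\<exists>w. word_in A w \<and> evalw G \<pi> w = x \<and> length w = wlen G A \<pi> x"
proof -
  have "\<exists>n w. length w = n \<and> word_in A w \<and> evalw G \<pi> w = x"
    using exists_word[OF assms] by blast
  from LeastI_ex[OF this] show ?thesis unfolding wlen_def by blast
qed

lemma wlen_mult_le:
  assumes "x \<in> carrier G" "y \<in> carrier G"
  shows "wlen G A \<pi> (x \<otimes> y) \<le> wlen G A \<pi> x + wlen G A \<pi> y"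
proof -
  obtain w v where "word_in A w" "evalw G \<pi> w = x" "length w = wlen G A \<pi> x"
    and "word_in A v" "evalw G \<pi> v = y" "length v = wlen G A \<pi> y"
    using exists_shortest_word assms by meson
  then show ?thesis using wlen_le_length[of "w @ v"] by (simp add: evalw_append)
qed

lemma wlen_inv_le:
  assumes "x \<in> carrier G"
  shows "wlen G A \<pi> (inv x) \<le> wlen G A \<pi> x"
proof -
  obtain w where "word_in A w" "evalw G \<pi> w = x" "length w = wlen G A \<pi> x"
    using exists_shortest_word assms by blast
  then show ?thesis using wlen_le_length[of "winv w"] by (simp add: evalw_winv)
qed

lemma wlen_inv [simp]: "x \<in> carrier G \<Longrightarrow> wlen G A \<pi> (inv x) = wlen G A \<pi> x"
  using wlen_inv_le[of x] wlen_inv_le[of "inv x"] by simp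

lemma wdist_commute: "x \<in> carrier G \<Longrightarrow> y \<in> carrier G \<Longrightarrow> wdist G A \<pi> x y = wdist G A \<pi> y x"
  unfolding wdist_def by (metis inv_mult_group inv_closed inv_inv wlen_inv m_closed)

lemma wdist_triangle:
  assumes "x \<in> carrier G" "y \<in> carrier G" "z \<in> carrier G"
  shows "wdist G A \<pi> x z \<le> wdist G A \<pi> x y + wdist G A \<pi> y z"
proof -
  have "inv x \<otimes> z = (inv x \<otimes> y) \<otimes> (inv y \<otimes> z)"
    using assms by (simp add: m_assoc)
  then show ?thesis
    unfolding wdist_def using wlen_mult_le[of "inv x \<otimes> y" "inv y \<otimes> z"] assms by simp
qed

lemma wdist_one_right [simp]: "x \<in> carrier G \<Longrightarrow> wdist G A \<pi> x \<one> = wlen G A \<pi> x"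
  by (simp add: wdist_def)

end

lemma same_edge_commute: "e \<in> same_edge p q \<Longrightarrow> e \<in> same_edge q p"
  by (cases p; cases q) (auto split: if_splits)

lemma finite_same_edge: "finite (same_edge p q)"
  by (cases p; cases q) auto

lemma ends_same_edge:
  assumes "e \<in> same_edge q r" and "(y, d) \<in> set (ends G \<pi> q)"
  shows "\<exists>d'. (y, d') \<in> set (ends G \<pi> r) \<and> d' \<le> d + e"
  using assms by (cases q; cases r) (auto split: if_splits)

lemma cdist_Vx [simp]: "cdist G A \<pi> (Vx x) (Vx y) = wdist G A \<pi> x y"
  by (simp add: cdist_def)

context alphabet_group
begin

definition path_candidates :: "('g, 'a) cpoint \<Rightarrow> ('g, 'a) cpoint \<Rightarrow> real set" where
  "path_candidates p q = {d1 + wdist G A \<pi> x y + d2 | x d1 y d2.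
      (x, d1) \<in> set (ends G \<pi> p) \<and> (y, d2) \<in> set (ends G \<pi> q)} \<union> same_edge p q"

lemma path_candidatesI:
  "(x, d1) \<in> set (ends G \<pi> p) \<Longrightarrow> (y, d2) \<in> set (ends G \<pi> q) \<Longrightarrow>
    d1 + wdist G A \<pi> x y + d2 \<in> path_candidates p q"
  "e \<in> same_edge p q \<Longrightarrow> e \<in> path_candidates p q"
  unfolding path_candidates_def by blast+

lemma path_candidatesE:
  assumes "e \<in> path_candidates p q"
  obtains (vertices) x d1 y d2 where "e = d1 + wdist G A \<pi> x y + d2"
      "(x, d1) \<in> set (ends G \<pi> p)" "(y, d2) \<in> set (ends G \<pi> q)"
    | (edge) "e \<in> same_edge p q"
  using assms unfolding path_candidates_def by blast

lemma finite_path_candidates: "finite (path_candidates p q)"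
proof -
  have "path_candidates p q \<subseteq>
      (\<lambda>((x, d1), (y, d2)). d1 + wdist G A \<pi> x y + d2) ` (set (ends G \<pi> p) \<times> set (ends G \<pi> q))
      \<union> same_edge p q"
    unfolding path_candidates_def by force
  then show ?thesis by (rule finite_subset) (simp add: finite_same_edge)
qed

lemma path_candidates_nonempty: "path_candidates p q \<noteq> {}"
proof -
  obtain x d1 y d2 where "(x, d1) \<in> set (ends G \<pi> p)" "(y, d2) \<in> set (ends G \<pi> q)"
    by (cases p; cases q) auto
  then show ?thesis by (blast dest: path_candidatesI(1))
qed

lemma cdist_in_path_candidates: "cdist G A \<pi> p q \<in> path_candidates p q"
  unfolding cdist_def path_candidates_def[symmetric]
  using finite_path_candidates path_candidates_nonempty by (rule Min_in)

lemma cdist_le_path_candidate: "e \<in> path_candidates p q \<Longrightarrow> cdist G A \<pi> p q \<le> e"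
  unfolding cdist_def path_candidates_def[symmetric] using finite_path_candidates by (rule Min_le)

lemma ends_closed: "valid_pt G A p \<Longrightarrow> (x, d) \<in> set (ends G \<pi> p) \<Longrightarrow> x \<in> carrier G"
  by (cases p) (auto simp: valid_pt_def)

lemma wdist_ends_le:
  assumes "valid_pt G A p" "(y, d) \<in> set (ends G \<pi> p)" "(y', d') \<in> set (ends G \<pi> p)"
  shows "wdist G A \<pi> y y' \<le> d + d'"
proof (cases p)
  case (Vx x)
  then show ?thesis using assms by (simp add: wdist_def valid_pt_def)
next
  case (Ed g a t)
  then have "g \<in> carrier G" "a \<in> A" "0 < t" "t < 1" using assms(1) by (auto simp: valid_pt_def)
  moreover from this have "wdist G A \<pi> g (g \<otimes> \<pi> a) \<le> 1" "wdist G A \<pi> (g \<otimes> \<pi> a) g \<le> 1"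
    using wlen_letter wlen_inv_letter
    by (simp_all add: wdist_def inv_mult_group m_assoc)
  ultimately show ?thesis using assms Ed by (auto simp: wdist_def)
qed

end

context marked_group
begin

lemma path_candidates_commute:
  assumes "valid_pt G A p" "valid_pt G A q"
  shows "path_candidates p q = path_candidates q p"
proof -
  have sub: "path_candidates p q \<subseteq> path_candidates q p" if "valid_pt G A p" "valid_pt G A q" for p q
  proof
    fix e assume "e \<in> path_candidates p q"
    then show "e \<in> path_candidates q p"
    proof (cases rule: path_candidatesE)
      case (vertices x d1 y d2)
      then have "e = d2 + wdist G A \<pi> y x + d1"
        using wdist_commute ends_closed that by simp
      then show ?thesis using vertices path_candidatesI(1) by blast
    qed (simp add: same_edge_commute path_candidatesI(2))
  qed
  show ?thesis using sub[OF assms] sub[OF assms(2,1)] by blast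
qed

lemma cdist_commute: "valid_pt G A p \<Longrightarrow> valid_pt G A q \<Longrightarrow> cdist G A \<pi> p q = cdist G A \<pi> q p"
  unfolding cdist_def path_candidates_def[symmetric] by (simp add: path_candidates_commute)

lemma path_candidates_triangle:
  assumes valid: "valid_pt G A p" "valid_pt G A q" "valid_pt G A r"
    and e1: "e1 \<in> path_candidates p q" and e2: "e2 \<in> path_candidates q r"
  shows "\<exists>e \<in> path_candidates p r. e \<le> e1 + e2"
  using e1
proof (cases rule: path_candidatesE)
  case (vertices x d1 y d2)
  from e2 show ?thesis
  proof (cases rule: path_candidatesE)
    case (vertices y' d2' z d3)
    have "x \<in> carrier G" "y \<in> carrier G" "y' \<in> carrier G" "z \<in> carrier G"
      using \<open>(x, d1) \<in> _\<close> \<open>(y, d2) \<in> _\<close> vertices ends_closed valid by blast+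
    then have "wdist G A \<pi> x z \<le> wdist G A \<pi> x y + wdist G A \<pi> y y' + wdist G A \<pi> y' z"
      by (meson add_mono order.trans order_refl wdist_triangle)
    moreover have "wdist G A \<pi> y y' \<le> d2 + d2'"
      using wdist_ends_le[OF valid(2)] \<open>(y, d2) \<in> _\<close> vertices by blast
    ultimately show ?thesis
      using path_candidatesI(1)[OF \<open>(x, d1) \<in> _\<close> \<open>(z, d3) \<in> _\<close>] \<open>e1 = _\<close> \<open>e2 = _\<close>
      by (auto intro!: bexI[of _ "d1 + wdist G A \<pi> x z + d3"])
  next
    case edge
    then obtain d3 where "(y, d3) \<in> set (ends G \<pi> r)" "d3 \<le> d2 + e2"
      using ends_same_edge[OF edge \<open>(y, d2) \<in> _\<close>] by blast
    then show ?thesis using path_candidatesI(1)[OF \<open>(x, d1) \<in> _\<close>] \<open>e1 = _\<close>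
      by (auto intro!: bexI[of _ "d1 + wdist G A \<pi> x y + d3"])
  qed
next
  case edge
  note edge1 = this
  from e2 show ?thesis
  proof (cases rule: path_candidatesE)
    case (vertices y d2 z d3)
    obtain d1 where "(y, d1) \<in> set (ends G \<pi> p)" "d1 \<le> d2 + e1"
      using ends_same_edge[OF same_edge_commute[OF edge1]] vertices by blast
    then show ?thesis using path_candidatesI(1)[OF _ \<open>(z, d3) \<in> _\<close>] \<open>e2 = _\<close>
      by (auto intro!: bexI[of _ "d1 + wdist G A \<pi> y z + d3"])
  next
    case edge
    with edge1 obtain g a s t u where "p = Ed g a s" "r = Ed g a u" "e1 = \<bar>s - t\<bar>" "e2 = \<bar>t - u\<bar>"
      by (cases p; cases q; cases r) (auto split: if_splits)
    then show ?thesis using path_candidatesI(2)[of "\<bar>s - u\<bar>" p r]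
      by (auto intro!: bexI[of _ "\<bar>s - u\<bar>"])
  qed
qed

lemma cdist_triangle:
  assumes "valid_pt G A p" "valid_pt G A q" "valid_pt G A r"
  shows "cdist G A \<pi> p r \<le> cdist G A \<pi> p q + cdist G A \<pi> q r"
  using path_candidates_triangle[OF assms cdist_in_path_candidates cdist_in_path_candidates]
    cdist_le_path_candidate by fastforce

end

sublocale marked_group \<subseteq> cayley: pseudometric_on "Collect (valid_pt G A)" "cdist G A \<pi>"
  by unfold_locales (simp_all add: cdist_commute cdist_triangle)

context marked_group
begin

lemma geod_iff_isometric_segment:
  "geod G A \<pi> \<gamma> L p q \<longleftrightarrow> cayley.isometric_segment \<gamma> L \<and> \<gamma> 0 = p \<and> \<gamma> L = q"
  unfolding geod_def cayley.isometric_segment_def by auto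

lemma geod_Vx_length: "geod G A \<pi> \<gamma> L (Vx x) (Vx y) \<Longrightarrow> L = wdist G A \<pi> x y"
  using cayley.isometric_segment_length by (fastforce simp: geod_iff_isometric_segment)

end

lemma ydist_le_length:
  "word_in A w \<Longrightarrow> H #>\<^bsub>G\<^esub> (x \<otimes>\<^bsub>G\<^esub> evalw G \<pi> w) = H #>\<^bsub>G\<^esub> y \<Longrightarrow> ydist G A \<pi> H x y \<le> length w"
  unfolding ydist_def by (rule Least_le) blast

lemma exists_ydist_word:
  assumes "word_in A w" "H #>\<^bsub>G\<^esub> (x \<otimes>\<^bsub>G\<^esub> evalw G \<pi> w) = H #>\<^bsub>G\<^esub> y"
  shows "\<exists>v. word_in A v \<and> length v = ydist G A \<pi> H x y \<and> H #>\<^bsub>G\<^esub> (x \<otimes>\<^bsub>G\<^esub> evalw G \<pi> v) = H #>\<^bsub>G\<^esub> y"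
proof -
  have "\<exists>n v. length v = n \<and> word_in A v \<and> H #>\<^bsub>G\<^esub> (x \<otimes>\<^bsub>G\<^esub> evalw G \<pi> v) = H #>\<^bsub>G\<^esub> y"
    using assms by blast
  from LeastI_ex[OF this] show ?thesis unfolding ydist_def by blast
qed

context alphabet_group
begin

lemma near_geod_length_le:
  assumes H: "subgroup H G" and g: "g \<in> carrier G" and w: "near_geod_from_to G A \<pi> H g f w"
  shows "length w \<le> ydist G A \<pi> H g f + 4"
proof -
  obtain w1 w' w2 where w_split: "w = w1 @ w' @ w2" "length w1 \<le> 1" "length w2 \<le> 1"
    and geodesic: "ygeod G A \<pi> H (g \<otimes> evalw G \<pi> w1) w'"
    using w unfolding near_geod_from_to_def near_geod_def by blast
  have words: "word_in A w1" "word_in A w'" "word_in A w2"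
    and coset_w: "H #> (g \<otimes> evalw G \<pi> w) = H #> f"
    using w w_split unfolding near_geod_from_to_def by auto
  obtain v where v: "word_in A v" "length v = ydist G A \<pi> H g f" "H #> (g \<otimes> evalw G \<pi> v) = H #> f"
    using exists_ydist_word[OF _ coset_w] w unfolding near_geod_from_to_def by blast
  txt \<open>With v a Y-geodesic from Hg to Hf, the word winv w1 @ v @ winv w2 leads from H x1 to the
    end of the Y-geodesic w'.\<close>
  define x1 where "x1 = g \<otimes> evalw G \<pi> w1"
  define z where "z = winv w1 @ v @ winv w2"
  have HG: "H \<subseteq> carrier G" using H by (rule subgroup.subset)
  have "x1 \<otimes> evalw G \<pi> z = (g \<otimes> evalw G \<pi> v) \<otimes> inv (evalw G \<pi> w2)"
    "x1 \<otimes> evalw G \<pi> w' = (g \<otimes> evalw G \<pi> w) \<otimes> inv (evalw G \<pi> w2)"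
    using g words v(1) unfolding x1_def z_def w_split(1)
    by (simp_all add: evalw_append evalw_winv m_assoc)
  then have coset_z: "H #> (x1 \<otimes> evalw G \<pi> z) = H #> (x1 \<otimes> evalw G \<pi> w')"
    using g words v coset_w w HG
    by (simp add: near_geod_from_to_def flip: coset_mult_assoc)
  have "length w' = ydist G A \<pi> H x1 (x1 \<otimes> evalw G \<pi> w')"
    using geodesic unfolding ygeod_def x1_def by simp
  also have "\<dots> \<le> length z"
    using ydist_le_length[OF _ coset_z] words v(1) unfolding z_def by simp
  finally show ?thesis using w_split v(2) unfolding z_def by simp
qed

end

context marked_group
begin

lemma ydist_le_wlen:
  assumes "word_in A w" "H #> (x \<otimes> evalw G \<pi> w) = H #> y"
  shows "ydist G A \<pi> H x y \<le> wlen G A \<pi> (evalw G \<pi> w)"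
proof -
  obtain v where "word_in A v" "evalw G \<pi> v = evalw G \<pi> w" "length v = wlen G A \<pi> (evalw G \<pi> w)"
    using exists_shortest_word assms(1) evalw_closed by blast
  with assms(2) show ?thesis using ydist_le_length[where G = G and \<pi> = \<pi> and w = v] by simp
qed

lemma wlen_near_geod_labels_le:
  assumes "subgroup H G" "g \<in> carrier G"
    and "near_geod_from_to G A \<pi> H g f w" "near_geod_from_to G A \<pi> H g f u"
  shows "wlen G A \<pi> (evalw G \<pi> w) \<le> wlen G A \<pi> (evalw G \<pi> u) + 4"
proof -
  have "wlen G A \<pi> (evalw G \<pi> w) \<le> length w"
    using assms(3) wlen_le_length unfolding near_geod_from_to_def by blast
  also have "\<dots> \<le> ydist G A \<pi> H g f + 4" using near_geod_length_le assms(1-3) .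
  also have "ydist G A \<pi> H g f \<le> wlen G A \<pi> (evalw G \<pi> u)"
    using assms(4) ydist_le_wlen unfolding near_geod_from_to_def by blast
  finally show ?thesis by simp
qed

lemma shortest_in_coset_wlen_le:
  "shortest_in_coset G A \<pi> H g \<Longrightarrow> h \<in> H \<Longrightarrow> wlen G A \<pi> g \<le> wlen G A \<pi> (h \<otimes> g)"
  unfolding shortest_in_coset_def r_coset_def by blast

lemma trim_triangle_of_geods:
  assumes trim: "all_trim G A \<pi> \<delta>" and "0 \<le> \<delta>"
    and \<sigma>: "geod G A \<pi> \<sigma> T p q" and \<alpha>: "geod G A \<pi> \<alpha> La p r" and \<beta>: "geod G A \<pi> \<beta> Lb q r"
  shows "trim_triangle (Collect (valid_pt G A)) (cdist G A \<pi>) \<delta> \<sigma> T \<alpha> La \<beta> Lb"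
proof -
  have "valid_pt G A p" "valid_pt G A q" "valid_pt G A r"
    using \<sigma> \<alpha> unfolding geod_def by force+
  then have "trim_at G A \<pi> \<delta> \<sigma> T \<alpha> La Lb" "trim_at G A \<pi> \<delta> (revp \<sigma> T) T \<beta> Lb La"
    "trim_at G A \<pi> \<delta> (revp \<alpha> La) La (revp \<beta> Lb) Lb T"
    using trim \<sigma> \<alpha> \<beta> unfolding all_trim_def by blast+
  then show ?thesis
    using assms unfolding trim_triangle_def trim_triangle_axioms_def
    by (auto simp: geod_iff_isometric_segment trim_at_def revp_def cayley.pseudometric_on_axioms)
qed

lemma bigon_segment_le:
  fixes \<delta> K :: real
  assumes H: "subgroup H G" and trim: "all_trim G A \<pi> \<delta>" and "0 \<le> \<delta>"
    and g: "shortest_in_coset G A \<pi> H g" and h: "h \<in> H" and hK: "wlen G A \<pi> h \<le> K"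
    and w: "near_geod_from_to G A \<pi> H g f w" and u: "near_geod_from_to G A \<pi> H g f u"
    and closes: "h \<otimes> g \<otimes> evalw G \<pi> u = g \<otimes> evalw G \<pi> w"
    and \<sigma>: "geod G A \<pi> \<sigma> L\<sigma> (Vx g) (Vx (h \<otimes> g))"
    and \<alpha>: "geod G A \<pi> \<alpha> L\<alpha> (Vx g) (Vx (g \<otimes> evalw G \<pi> w))"
    and \<beta>: "geod G A \<pi> \<beta> L\<beta> (Vx (h \<otimes> g)) (Vx (g \<otimes> evalw G \<pi> w))"
    and ab: "0 \<le> a" "a \<le> b" "b \<le> L\<sigma>"
    and mid: "(a + b) / 2 = gprod G A \<pi> (h \<otimes> g) \<one> g"
    and near: "(\<forall>t \<in> {a..b}. \<exists>s \<in> {0..L\<alpha>}. cdist G A \<pi> (\<sigma> t) (\<alpha> s) \<le> \<delta>) \<or>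
      (\<forall>t \<in> {a..b}. \<exists>s \<in> {0..L\<beta>}. cdist G A \<pi> (\<sigma> t) (\<beta> s) \<le> \<delta>)"
  shows "b - a \<le> 4 + K + 6 * \<delta>"
proof -
  interpret triangle: trim_triangle "Collect (valid_pt G A)" "cdist G A \<pi>" \<delta> \<sigma> L\<sigma> \<alpha> L\<alpha> \<beta> L\<beta>
    using trim_triangle_of_geods[OF trim \<open>0 \<le> \<delta>\<close> \<sigma> \<alpha> \<beta>] .
  have carrier: "g \<in> carrier G" "h \<in> carrier G" "evalw G \<pi> w \<in> carrier G" "evalw G \<pi> u \<in> carrier G"
    using g h w u subgroup.subset[OF H]
    by (auto simp: shortest_in_coset_def near_geod_from_to_def)
  have L\<alpha>: "L\<alpha> = wlen G A \<pi> (evalw G \<pi> w)"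
    using geod_Vx_length[OF \<alpha>] carrier by (simp add: wdist_def flip: m_assoc)
  have L\<beta>: "L\<beta> = wlen G A \<pi> (evalw G \<pi> u)"
  proof -
    have "inv (h \<otimes> g) \<otimes> (g \<otimes> evalw G \<pi> w) = evalw G \<pi> u"
      using carrier closes by (subst inv_solve_left') simp_all
    then show ?thesis using geod_Vx_length[OF \<beta>] by (simp add: wdist_def)
  qed
  have "L\<alpha> \<le> L\<beta> + 4" "L\<beta> \<le> L\<alpha> + 4"
    using wlen_near_geod_labels_le[OF H _ w u] wlen_near_geod_labels_le[OF H _ u w] carrier
    unfolding L\<alpha> L\<beta> by simp_all
  moreover have "wlen G A \<pi> g \<le> wlen G A \<pi> (h \<otimes> g)" "wlen G A \<pi> (h \<otimes> g) \<le> wlen G A \<pi> g + K"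
    using shortest_in_coset_wlen_le[OF g h] wlen_mult_le[of h g] carrier hK by simp_all
  moreover have "a + b = L\<sigma> + wlen G A \<pi> g - wlen G A \<pi> (h \<otimes> g)"
    using mid geod_Vx_length[OF \<sigma>] carrier wdist_commute[of g "h \<otimes> g"]
    by (simp add: gprod_def field_simps)
  moreover have "2 * b \<le> L\<sigma> + L\<alpha> - L\<beta> + 6 * \<delta> \<or> L\<sigma> + L\<alpha> - L\<beta> - 6 * \<delta> \<le> 2 * a"
    using triangle.segment_near_one_side[OF ab near] .
  ultimately show ?thesis using \<open>0 \<le> \<delta>\<close> hK by linarith
qed

lemma bigon_segment_le_of_key_bound:
  fixes \<delta> :: real and K :: int
  assumes H: "subgroup H G" and trim: "all_trim G A \<pi> \<delta>" and "0 \<le> \<delta>"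
    and key: "\<And>g f w h. shortest_in_coset G A \<pi> H g \<Longrightarrow> shortest_in_coset G A \<pi> H f \<Longrightarrow>
      near_geod_from_to G A \<pi> H g f w \<Longrightarrow> h \<in> H \<Longrightarrow> h \<otimes> f = g \<otimes> evalw G \<pi> w \<Longrightarrow>
      int (wlen G A \<pi> h) \<le> K"
    and g: "shortest_in_coset G A \<pi> H g" and f: "shortest_in_coset G A \<pi> H f"
    and w: "near_geod_from_to G A \<pi> H g f w" and u: "near_geod_from_to G A \<pi> H g f u"
    and "h1 \<in> H" "h2 \<in> H"
    and h1: "h1 \<otimes> g \<otimes> evalw G \<pi> w = f" and h2: "h2 \<otimes> g \<otimes> evalw G \<pi> u = f"
    and \<sigma>: "geod G A \<pi> \<sigma> L\<sigma> (Vx g) (Vx ((inv h1 \<otimes> h2) \<otimes> g))"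
    and \<alpha>: "geod G A \<pi> \<alpha> L\<alpha> (Vx g) (Vx (g \<otimes> evalw G \<pi> w))"
    and \<beta>: "geod G A \<pi> \<beta> L\<beta> (Vx ((inv h1 \<otimes> h2) \<otimes> g)) (Vx (g \<otimes> evalw G \<pi> w))"
    and ab: "0 \<le> a" "a \<le> b" "b \<le> L\<sigma>"
    and mid: "(a + b) / 2 = gprod G A \<pi> ((inv h1 \<otimes> h2) \<otimes> g) \<one> g"
    and near: "(\<forall>t \<in> {a..b}. \<exists>s \<in> {0..L\<alpha>}. cdist G A \<pi> (\<sigma> t) (\<alpha> s) \<le> \<delta>) \<or>
      (\<forall>t \<in> {a..b}. \<exists>s \<in> {0..L\<beta>}. cdist G A \<pi> (\<sigma> t) (\<beta> s) \<le> \<delta>)"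
  shows "b - a \<le> 4 + 2 * real_of_int K + 6 * \<delta>"
proof -
  have carrier: "g \<in> carrier G" "h1 \<in> carrier G" "h2 \<in> carrier G"
    "evalw G \<pi> w \<in> carrier G" "evalw G \<pi> u \<in> carrier G"
    using g w u \<open>h1 \<in> H\<close> \<open>h2 \<in> H\<close> subgroup.subset[OF H]
    by (auto simp: shortest_in_coset_def near_geod_from_to_def)
  have translates: "inv h1 \<otimes> f = g \<otimes> evalw G \<pi> w" "inv h2 \<otimes> f = g \<otimes> evalw G \<pi> u"
    using carrier by (simp add: m_assoc flip: h1, simp add: m_assoc flip: h2)
  have "wlen G A \<pi> (inv h1) \<le> K" "wlen G A \<pi> (inv h2) \<le> K"
    using key[OF g f w _ translates(1)] key[OF g f u _ translates(2)] \<open>h1 \<in> H\<close> \<open>h2 \<in> H\<close> H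
    by (simp_all add: subgroup.m_inv_closed)
  then have "wlen G A \<pi> (inv h1 \<otimes> h2) \<le> 2 * real_of_int K"
    using wlen_mult_le[of "inv h1" h2] carrier by simp
  moreover have "(inv h1 \<otimes> h2) \<otimes> g \<otimes> evalw G \<pi> u = g \<otimes> evalw G \<pi> w"
  proof -
    have "(inv h1 \<otimes> h2) \<otimes> g \<otimes> evalw G \<pi> u = inv h1 \<otimes> (h2 \<otimes> g \<otimes> evalw G \<pi> u)"
      using carrier by (simp add: m_assoc)
    then show ?thesis using h2 translates(1) by simp
  qed
  moreover have "inv h1 \<otimes> h2 \<in> H"
    using H \<open>h1 \<in> H\<close> \<open>h2 \<in> H\<close> by (simp add: subgroup.m_closed subgroup.m_inv_closed)
  ultimately show ?thesis
    using bigon_segment_le[OF H trim \<open>0 \<le> \<delta>\<close> g _ _ w u _ \<sigma> \<alpha> \<beta> ab mid near] by simp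
qed

end

theorem lemma4p2:
  fixes G :: "('g, 'b) monoid_scheme" and A :: "'a set" and \<pi> :: "'a \<Rightarrow> 'g"
    and H :: "'g set" and \<delta> :: int and E :: real and K1 :: int
  assumes grp: "group G"
    and finA: "finite A"
    and piA: "\<pi> ` A \<subseteq> carrier G"
    and gen: "generate G (\<pi> ` A) = carrier G"
    and delta: "\<delta> \<ge> 10"
    and trim: "all_trim G A \<pi> (real_of_int \<delta>)"
    and sub: "subgroup H G"
    and qc: "quasiconvex G A \<pi> H E"
    and K1pos: "K1 > 0"
    and key: "\<And>g f w h. shortest_in_coset G A \<pi> H g \<Longrightarrow> shortest_in_coset G A \<pi> H f \<Longrightarrow>
                near_geod_from_to G A \<pi> H g f w \<Longrightarrow> h \<in> H \<Longrightarrow>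
                h \<otimes>\<^bsub>G\<^esub> f = g \<otimes>\<^bsub>G\<^esub> evalw G \<pi> w \<Longrightarrow> int (wlen G A \<pi> h) \<le> K1"
  shows "\<exists>K2 > 0. \<forall>g f w u h1 h2 \<gamma>1 L1 \<gamma>2 L2 \<sigma> L\<sigma> \<alpha> L\<alpha> \<beta> L\<beta> a b.
     shortest_in_coset G A \<pi> H g \<and> shortest_in_coset G A \<pi> H f \<and>
     near_geod_from_to G A \<pi> H g f w \<and> near_geod_from_to G A \<pi> H g f u \<and>
     h1 \<in> H \<and> h2 \<in> H \<and>
     h1 \<otimes>\<^bsub>G\<^esub> g \<otimes>\<^bsub>G\<^esub> evalw G \<pi> w = f \<and> h2 \<otimes>\<^bsub>G\<^esub> g \<otimes>\<^bsub>G\<^esub> evalw G \<pi> u = f \<and>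
     geod G A \<pi> \<gamma>1 L1 (Vx \<one>\<^bsub>G\<^esub>) (Vx g) \<and>
     geod G A \<pi> \<gamma>2 L2 (Vx \<one>\<^bsub>G\<^esub>) (Vx ((inv\<^bsub>G\<^esub> h1 \<otimes>\<^bsub>G\<^esub> h2) \<otimes>\<^bsub>G\<^esub> g)) \<and>
     geod G A \<pi> \<sigma> L\<sigma> (Vx g) (Vx ((inv\<^bsub>G\<^esub> h1 \<otimes>\<^bsub>G\<^esub> h2) \<otimes>\<^bsub>G\<^esub> g)) \<and>
     geod G A \<pi> \<alpha> L\<alpha> (Vx g) (Vx (g \<otimes>\<^bsub>G\<^esub> evalw G \<pi> w)) \<and>
     geod G A \<pi> \<beta> L\<beta> (Vx ((inv\<^bsub>G\<^esub> h1 \<otimes>\<^bsub>G\<^esub> h2) \<otimes>\<^bsub>G\<^esub> g)) (Vx (g \<otimes>\<^bsub>G\<^esub> evalw G \<pi> w)) \<and>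
     0 \<le> a \<and> a \<le> b \<and> b \<le> L\<sigma> \<and>
     (a + b) / 2 = gprod G A \<pi> ((inv\<^bsub>G\<^esub> h1 \<otimes>\<^bsub>G\<^esub> h2) \<otimes>\<^bsub>G\<^esub> g) \<one>\<^bsub>G\<^esub> g \<and>
     ((\<forall>t \<in> {a..b}. \<exists>s \<in> {0..L\<alpha>}. cdist G A \<pi> (\<sigma> t) (\<alpha> s) \<le> real_of_int \<delta>) \<or>
      (\<forall>t \<in> {a..b}. \<exists>s \<in> {0..L\<beta>}. cdist G A \<pi> (\<sigma> t) (\<beta> s) \<le> real_of_int \<delta>))
     \<longrightarrow> b - a \<le> K2"
proof -
  interpret marked_group G A \<pi>
    using grp piA gen
    by (simp add: marked_group_def marked_group_axioms_def alphabet_group_def alphabet_group_axioms_def)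
  show ?thesis
  proof ((intro exI[of _ "4 + 2 * real_of_int K1 + 6 * real_of_int \<delta>"] conjI allI impI;
      (elim conjE)?), goal_cases)
    case 1
    show "0 < 4 + 2 * real_of_int K1 + 6 * real_of_int \<delta>" using K1pos delta by simp
  next
    case (2 g f w u h1 h2 \<gamma>1 L1 \<gamma>2 L2 \<sigma> L\<sigma> \<alpha> L\<alpha> \<beta> L\<beta> a b)
    \<comment> \<open>Premises 9 and 10, the sides [1, g] and [1, hg] of \<Delta>1, serve only to locate c,
      which lies at distance (hg, 1)_g from g.\<close>
    show ?case using bigon_segment_le_of_key_bound[OF sub trim _ key 2(1-8) 2(11-18)] delta by simp
  qed
qed

end
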